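(* Let $A$ be a subalgebra of the matrix metabelian Lie algebra $M^0_{I,\Lambda}$. Then $\mathrm{Fit}(A)$ (which is abelian) is a torsion-free module over the polynomial ring $k[x_d:d\in D]$, where the module structure is defined via a family $\{e_d:d\in D\}\subseteq A$ whose images form a basis of $A/\mathrm{Fit}(A)$ by $b\cdot x_d=b\circ e_d$.
   Context: For sets $I,\Lambda$ and a field $k$, let $R=k[x_\alpha:\alpha\in\Lambda]$ and $T$ the free $R$-module with basis $\{u_i:i\in I\}$. $M_{I,\Lambda}$ is the set of pairs $(f,u)$, $f\in R$, $u\in T$, with componentwise linear operations and product $(f,u)\circ(g,v)=(0,ug-vf)$; $M^0_{I,\Lambda}$ is its subalgebra of pairs $(f,u)$ with $f$ a $k$-linear combination of the variables $x_\alpha$ (possibly $0$). $\mathrm{Fit}(A)$ is the ideal of $A$ generated by all elements lying in nilpotent ideals of $A$. For an abelian ideal $J\supseteq A^2$ of a metabelian Lie algebra, the module action $b\cdot x_d=b\circ e_d$ extends multiplicatively and linearly to a well-defined module structure over the commutative polynomial ring. *)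

theory Defs
  imports Main "HOL-Library.Poly_Mapping" "HOL-Library.Product_Plus"
begin

type_synonym ('v, 'k) mpoly = "('v \<Rightarrow>\<^sub>0 nat) \<Rightarrow>\<^sub>0 'k"

text \<open>Elements of M_{I,Lambda}: pairs (f,u), f in R = k[x_a : a in Lambda],
  u in the free R-module T with basis u_i (i in I), represented as I =>0 R.\<close>
type_synonym ('a, 'i, 'k) melt = "('a, 'k) mpoly \<times> ('i \<Rightarrow>\<^sub>0 ('a, 'k) mpoly)"

definition var :: "'v \<Rightarrow> ('v, 'k::comm_ring_1) mpoly" where
  "var v = Poly_Mapping.single (Poly_Mapping.single v 1) 1"

definition tscale :: "('i \<Rightarrow>\<^sub>0 ('a, 'k::comm_ring_1) mpoly) \<Rightarrow> ('a, 'k) mpoly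
    \<Rightarrow> ('i \<Rightarrow>\<^sub>0 ('a, 'k) mpoly)" where
  "tscale u g = Poly_Mapping.map (\<lambda>r. r * g) u"

definition mprod :: "('a, 'i, 'k::comm_ring_1) melt \<Rightarrow> ('a, 'i, 'k) melt \<Rightarrow> ('a, 'i, 'k) melt"
  (infixl "\<circ>\<^sub>M" 70) where
  "x \<circ>\<^sub>M y = (0, tscale (snd x) (fst y) - tscale (snd y) (fst x))"

definition kscale :: "'k::comm_ring_1 \<Rightarrow> ('a, 'i, 'k) melt \<Rightarrow> ('a, 'i, 'k) melt" where
  "kscale c x = (Poly_Mapping.map (\<lambda>r. c * r) (fst x),
                 Poly_Mapping.map (Poly_Mapping.map (\<lambda>r. c * r)) (snd x))"

definition M0 :: "('a, 'i, 'k::comm_ring_1) melt set" where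
  "M0 = {x. \<forall>m \<in> Poly_Mapping.keys (fst x). \<exists>a. m = Poly_Mapping.single a 1}"

definition ksubspace :: "('a, 'i, 'k::comm_ring_1) melt set \<Rightarrow> bool" where
  "ksubspace V \<longleftrightarrow> 0 \<in> V \<and> (\<forall>x\<in>V. \<forall>y\<in>V. x + y \<in> V) \<and> (\<forall>c. \<forall>x\<in>V. kscale c x \<in> V)"

definition kspan :: "('a, 'i, 'k::comm_ring_1) melt set \<Rightarrow> ('a, 'i, 'k) melt set" where
  "kspan S = \<Inter>{V. ksubspace V \<and> S \<subseteq> V}"

definition subalgebra :: "('a, 'i, 'k::comm_ring_1) melt set \<Rightarrow> ('a, 'i, 'k) melt set \<Rightarrow> bool" where
  "subalgebra A B \<longleftrightarrow> A \<subseteq> B \<and> ksubspace A \<and> (\<forall>x\<in>A. \<forall>y\<in>A. x \<circ>\<^sub>M y \<in> A)"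

definition lie_ideal :: "('a, 'i, 'k::comm_ring_1) melt set \<Rightarrow> ('a, 'i, 'k) melt set \<Rightarrow> bool" where
  "lie_ideal J A \<longleftrightarrow> J \<subseteq> A \<and> ksubspace J \<and>
     (\<forall>a\<in>A. \<forall>j\<in>J. a \<circ>\<^sub>M j \<in> J \<and> j \<circ>\<^sub>M a \<in> J)"

text \<open>Lower central series J^1 = J, J^{n+1} = span [J^n, J] (indexed from 0).\<close>
fun lcs :: "('a, 'i, 'k::comm_ring_1) melt set \<Rightarrow> nat \<Rightarrow> ('a, 'i, 'k) melt set" where
  "lcs J 0 = J"
| "lcs J (Suc n) = kspan {x \<circ>\<^sub>M y | x y. x \<in> lcs J n \<and> y \<in> J}"

definition nilpotent_set :: "('a, 'i, 'k::comm_ring_1) melt set \<Rightarrow> bool" where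
  "nilpotent_set J \<longleftrightarrow> (\<exists>n. lcs J n = {0})"

definition Fit :: "('a, 'i, 'k::comm_ring_1) melt set \<Rightarrow> ('a, 'i, 'k) melt set" where
  "Fit A = \<Inter>{J. lie_ideal J A \<and> \<Union>{N. lie_ideal N A \<and> nilpotent_set N} \<subseteq> J}"

text \<open>A list containing each d exactly (Poly_Mapping.lookup m d) times (order irrelevant by the
  well-definedness of the module structure).\<close>
definition mon_list :: "('d \<Rightarrow>\<^sub>0 nat) \<Rightarrow> 'd list" where
  "mon_list m = (SOME xs. \<forall>d. count_list xs d = Poly_Mapping.lookup m d)"

definition mon_act :: "('d \<Rightarrow> ('a, 'i, 'k::comm_ring_1) melt) \<Rightarrow> ('a, 'i, 'k) melt
    \<Rightarrow> ('d \<Rightarrow>\<^sub>0 nat) \<Rightarrow> ('a, 'i, 'k) melt" where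
  "mon_act e b m = fold (\<lambda>d c. c \<circ>\<^sub>M e d) (mon_list m) b"

definition poly_act :: "('d \<Rightarrow> ('a, 'i, 'k::comm_ring_1) melt) \<Rightarrow> ('a, 'i, 'k) melt
    \<Rightarrow> ('d, 'k) mpoly \<Rightarrow> ('a, 'i, 'k) melt" where
  "poly_act e b p = (\<Sum>m\<in>Poly_Mapping.keys p. kscale (Poly_Mapping.lookup p m) (mon_act e b m))"

definition lincomb :: "('d \<Rightarrow> ('a, 'i, 'k::comm_ring_1) melt) \<Rightarrow> ('d \<Rightarrow>\<^sub>0 'k) \<Rightarrow> ('a, 'i, 'k) melt" where
  "lincomb e c = (\<Sum>d\<in>Poly_Mapping.keys c. kscale (Poly_Mapping.lookup c d) (e d))"

end

theory Submission
  imports Defs "HOL.Vector_Spaces"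
begin

text \<open>
  A nilpotent ideal containing an element \<open>x\<close> with \<open>fst x \<noteq> 0\<close> forces \<open>x\<close> to be central:
  for \<open>y \<in> A\<close> the element \<open>z = x \<circ> y = (0, w)\<close> lies in the ideal, and multiplying it
  \<open>n\<close> times by \<open>x\<close> gives \<open>(0, w (fst x)\<^sup>n)\<close>, which vanishes for large \<open>n\<close>; as polynomial
  rings are domains, \<open>w = 0\<close>. A central element with \<open>fst x \<noteq> 0\<close> in turn makes \<open>A\<close>
  abelian, hence \<open>A = Fit A\<close>, which contradicts the independence of the \<open>e d\<close>
  modulo \<open>Fit A\<close>.
  So \<open>Fit A\<close> consists of the elements \<open>(0, w)\<close> of \<open>A\<close> and is abelian, and on it
  a polynomial \<open>p\<close> acts by multiplication with \<open>p\<close> evaluated at the linear forms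
  \<open>g\<^sub>d = fst (e d)\<close>. These forms are linearly independent modulo \<open>Fit A\<close>, hence
  algebraically independent, so this evaluation of a nonzero \<open>p\<close> is nonzero and the
  module is torsion-free.
\<close>

section \<open>Substitution in multivariate polynomials\<close>

definition mpoly_const :: "'k \<Rightarrow> ('v, 'k::comm_ring_1) mpoly" where
  "mpoly_const c = Poly_Mapping.single 0 c"

definition eval_monom :: "('v \<Rightarrow> ('w, 'k::comm_ring_1) mpoly) \<Rightarrow> ('v \<Rightarrow>\<^sub>0 nat) \<Rightarrow> ('w, 'k) mpoly" where
  "eval_monom f m = (\<Prod>v\<in>Poly_Mapping.keys m. f v ^ Poly_Mapping.lookup m v)"

definition mpoly_subst :: "('v \<Rightarrow> ('w, 'k::comm_ring_1) mpoly) \<Rightarrow> ('v, 'k) mpoly \<Rightarrow> ('w, 'k) mpoly" where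
  "mpoly_subst f q = (\<Sum>m\<in>Poly_Mapping.keys q. mpoly_const (Poly_Mapping.lookup q m) * eval_monom f m)"

lemma poly_mapping_sum_single:
  "q = (\<Sum>k\<in>Poly_Mapping.keys q. Poly_Mapping.single k (Poly_Mapping.lookup q k))"
  by (rule poly_mapping_eqI) (auto simp: lookup_sum lookup_single when_def in_keys_iff)

lemma mpoly_const_0 [simp]: "mpoly_const 0 = 0"
  by (simp add: mpoly_const_def)

lemma mpoly_const_1 [simp]: "mpoly_const 1 = 1"
  by (simp add: mpoly_const_def)

lemma mpoly_const_add: "mpoly_const (a + b) = mpoly_const a + mpoly_const b"
  by (simp add: mpoly_const_def single_add)

lemma mpoly_const_mult: "mpoly_const (a * b) = mpoly_const a * mpoly_const b"
  by (simp add: mpoly_const_def mult_single)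

lemma mpoly_const_mult_single: "mpoly_const c * Poly_Mapping.single m 1 = Poly_Mapping.single m c"
  by (simp add: mpoly_const_def mult_single)

lemma eval_monom_eq_prod_superset:
  assumes "finite T" "Poly_Mapping.keys m \<subseteq> T"
  shows "eval_monom f m = (\<Prod>v\<in>T. f v ^ Poly_Mapping.lookup m v)"
  unfolding eval_monom_def
  by (rule prod.mono_neutral_left) (use assms in \<open>auto simp: in_keys_iff\<close>)

lemma eval_monom_add: "eval_monom f (m + n) = eval_monom f m * eval_monom f n"
proof -
  let ?T = "Poly_Mapping.keys m \<union> Poly_Mapping.keys n"
  have "eval_monom f (m + n) = (\<Prod>v\<in>?T. f v ^ Poly_Mapping.lookup (m + n) v)"
    by (rule eval_monom_eq_prod_superset) (use keys_add[of m n] in auto)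
  also have "\<dots> = eval_monom f m * eval_monom f n"
    by (simp add: lookup_add power_add prod.distrib eval_monom_eq_prod_superset[of ?T])
  finally show ?thesis .
qed

lemma var_power: "var v ^ n = Poly_Mapping.single (Poly_Mapping.single v n) 1"
  by (induction n) (auto simp: var_def mult_single single_add[symmetric] mult.commute)

lemma eval_monom_var: "eval_monom var m = (Poly_Mapping.single m 1 :: ('v, 'k::comm_ring_1) mpoly)"
proof -
  have "(\<Prod>v\<in>T. Poly_Mapping.single (h v) (1::'k)) = Poly_Mapping.single (sum h T) 1"
    for T and h :: "'v \<Rightarrow> 'v \<Rightarrow>\<^sub>0 nat"
    by (induction T rule: infinite_finite_induct) (auto simp: mult_single)
  then show ?thesis
    by (simp add: eval_monom_def var_power poly_mapping_sum_single[of m, symmetric])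
qed

lemma mpoly_subst_eq_sum_superset:
  assumes "finite T" "Poly_Mapping.keys q \<subseteq> T"
  shows "mpoly_subst f q = (\<Sum>m\<in>T. mpoly_const (Poly_Mapping.lookup q m) * eval_monom f m)"
  unfolding mpoly_subst_def
  by (rule sum.mono_neutral_left) (use assms in \<open>auto simp: in_keys_iff\<close>)

lemma mpoly_subst_0 [simp]: "mpoly_subst f 0 = 0"
  by (simp add: mpoly_subst_def)

lemma mpoly_subst_add: "mpoly_subst f (p + q) = mpoly_subst f p + mpoly_subst f q"
proof -
  let ?T = "Poly_Mapping.keys p \<union> Poly_Mapping.keys q"
  show ?thesis
    using keys_add[of p q]
    by (simp add: mpoly_subst_eq_sum_superset[of ?T] lookup_add mpoly_const_add
        distrib_right sum.distrib)
qed

lemma mpoly_subst_sum: "mpoly_subst f (sum F T) = (\<Sum>x\<in>T. mpoly_subst f (F x))"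
  by (induction T rule: infinite_finite_induct) (auto simp: mpoly_subst_add)

lemma mpoly_subst_single: "mpoly_subst f (Poly_Mapping.single m c) = mpoly_const c * eval_monom f m"
  by (simp add: mpoly_subst_def)

lemma mpoly_subst_mult: "mpoly_subst f (p * q) = mpoly_subst f p * mpoly_subst f q"
proof -
  have "p * q = (\<Sum>m\<in>Poly_Mapping.keys p. \<Sum>n\<in>Poly_Mapping.keys q.
       Poly_Mapping.single (m + n) (Poly_Mapping.lookup p m * Poly_Mapping.lookup q n))"
    by (subst poly_mapping_sum_single[of p], subst poly_mapping_sum_single[of q])
      (simp add: sum_product mult_single)
  then have "mpoly_subst f (p * q) = (\<Sum>m\<in>Poly_Mapping.keys p. \<Sum>n\<in>Poly_Mapping.keys q.
       mpoly_const (Poly_Mapping.lookup p m) * eval_monom f m *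
       (mpoly_const (Poly_Mapping.lookup q n) * eval_monom f n))"
    by (simp add: mpoly_subst_sum mpoly_subst_single mpoly_const_mult eval_monom_add algebra_simps)
  also have "\<dots> = mpoly_subst f p * mpoly_subst f q"
    by (simp add: mpoly_subst_def sum_product)
  finally show ?thesis .
qed

lemma mpoly_subst_1 [simp]: "mpoly_subst f 1 = 1"
  by (simp add: mpoly_subst_def eval_monom_def)

lemma mpoly_subst_power: "mpoly_subst f (q ^ n) = mpoly_subst f q ^ n"
  by (induction n) (auto simp: mpoly_subst_mult)

lemma mpoly_subst_prod: "mpoly_subst f (prod F T) = (\<Prod>x\<in>T. mpoly_subst f (F x))"
  by (induction T rule: infinite_finite_induct) (auto simp: mpoly_subst_mult)

lemma mpoly_subst_const [simp]: "mpoly_subst f (mpoly_const c) = mpoly_const c"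
  by (simp add: mpoly_const_def mpoly_subst_single[unfolded mpoly_const_def] eval_monom_def)

lemma mpoly_subst_compose: "mpoly_subst h (mpoly_subst f q) = mpoly_subst (\<lambda>v. mpoly_subst h (f v)) q"
  by (simp add: mpoly_subst_def[of f] mpoly_subst_def[of "\<lambda>v. mpoly_subst h (f v)"]
      mpoly_subst_sum mpoly_subst_mult eval_monom_def mpoly_subst_prod mpoly_subst_power)

lemma mpoly_subst_cong:
  assumes "\<And>v m. m \<in> Poly_Mapping.keys q \<Longrightarrow> v \<in> Poly_Mapping.keys m \<Longrightarrow> f v = g v"
  shows "mpoly_subst f q = mpoly_subst g q"
  unfolding mpoly_subst_def eval_monom_def using assms
  by (intro sum.cong refl arg_cong2[where f="(*)"] prod.cong) auto

lemma mpoly_subst_var_id: "mpoly_subst var q = q"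
  by (simp add: mpoly_subst_def eval_monom_var mpoly_const_mult_single
      poly_mapping_sum_single[of q, symmetric])

lemma mpoly_subst_var: "mpoly_subst f (var v) = f v"
  by (simp add: var_def mpoly_subst_single eval_monom_def)

section \<open>Polynomial rings are domains\<close>

text \<open>The library provides \<open>idom\<close> only for linearly ordered variables; an injective
  renaming of the finitely many variables involved into \<open>nat\<close> transfers it.\<close>
lemma mpoly_mult_eq_0_iff:
  fixes p q :: "('v, 'k::idom) mpoly"
  shows "p * q = 0 \<longleftrightarrow> p = 0 \<or> q = 0"
proof
  assume pq: "p * q = 0"
  define S where "S = (\<Union>m\<in>Poly_Mapping.keys p \<union> Poly_Mapping.keys q. Poly_Mapping.keys m)"
  have "finite S" unfolding S_def by auto
  then obtain \<rho> :: "'v \<Rightarrow> nat" where inj: "inj_on \<rho> S"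
    using finite_imp_inj_to_nat_seg by blast
  define rename :: "('v, 'k) mpoly \<Rightarrow> (nat, 'k) mpoly" where "rename = mpoly_subst (\<lambda>v. var (\<rho> v))"
  have undo: "mpoly_subst (\<lambda>n. var (inv_into S \<rho> n)) (rename r) = r"
    if "Poly_Mapping.keys r \<subseteq> Poly_Mapping.keys p \<union> Poly_Mapping.keys q" for r
  proof -
    have "mpoly_subst (\<lambda>n. var (inv_into S \<rho> n)) (rename r)
        = mpoly_subst (\<lambda>v. var (inv_into S \<rho> (\<rho> v))) r"
      by (simp add: rename_def mpoly_subst_compose mpoly_subst_var)
    also have "\<dots> = mpoly_subst var r"
    proof (rule mpoly_subst_cong)
      fix v m assume "m \<in> Poly_Mapping.keys r" "v \<in> Poly_Mapping.keys m"
      with that have "v \<in> S" unfolding S_def by blast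
      with inj show "var (inv_into S \<rho> (\<rho> v)) = var v" by simp
    qed
    finally show ?thesis by (simp add: mpoly_subst_var_id)
  qed
  have "rename p * rename q = 0" using pq by (simp add: rename_def mpoly_subst_mult[symmetric])
  then have "rename p = 0 \<or> rename q = 0" by simp
  moreover have "mpoly_subst (\<lambda>n. var (inv_into S \<rho> n)) (rename p) = p"
    "mpoly_subst (\<lambda>n. var (inv_into S \<rho> n)) (rename q) = q"
    by (simp_all add: undo)
  ultimately show "p = 0 \<or> q = 0" by force
qed auto

lemma mpoly_power_eq_0_iff:
  fixes p :: "('v, 'k::idom) mpoly"
  shows "p ^ Suc n = 0 \<longleftrightarrow> p = 0"
  by (induction n) (auto simp: mpoly_mult_eq_0_iff)

section \<open>Linearly independent linear forms are algebraically independent\<close>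

definition mpoly_smult :: "'k::comm_ring_1 \<Rightarrow> ('v, 'k) mpoly \<Rightarrow> ('v, 'k) mpoly" where
  "mpoly_smult c p = mpoly_const c * p"

lemma vector_space_mpoly_smult: "vector_space (mpoly_smult :: 'k::field \<Rightarrow> ('v, 'k) mpoly \<Rightarrow> _)"
  by unfold_locales (simp_all add: mpoly_smult_def mpoly_const_add mpoly_const_mult algebra_simps)

lemma vector_space_pair_mpoly_smult:
  "vector_space_pair (mpoly_smult :: 'k::field \<Rightarrow> ('v, 'k) mpoly \<Rightarrow> _)
     (mpoly_smult :: 'k \<Rightarrow> ('w, 'k) mpoly \<Rightarrow> _)"
  unfolding vector_space_pair_def by (simp add: vector_space_mpoly_smult)

lemma mpoly_subst_linear_form:
  fixes \<psi> :: "('v, 'k::field) mpoly \<Rightarrow> ('w, 'k) mpoly"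
  assumes linear: "Vector_Spaces.linear mpoly_smult mpoly_smult \<psi>"
    and linear_form: "\<And>m. m \<in> Poly_Mapping.keys q \<Longrightarrow> \<exists>v. m = Poly_Mapping.single v 1"
  shows "mpoly_subst (\<lambda>v. \<psi> (var v)) q = \<psi> q"
proof -
  interpret vector_space_pair "mpoly_smult :: 'k \<Rightarrow> ('v, 'k) mpoly \<Rightarrow> _"
    "mpoly_smult :: 'k \<Rightarrow> ('w, 'k) mpoly \<Rightarrow> _"
    by (rule vector_space_pair_mpoly_smult)
  have "mpoly_const (Poly_Mapping.lookup q m) * eval_monom (\<lambda>v. \<psi> (var v)) m
      = \<psi> (Poly_Mapping.single m (Poly_Mapping.lookup q m))" if m_in: "m \<in> Poly_Mapping.keys q" for m
  proof -
    obtain v where m: "m = Poly_Mapping.single v 1" using linear_form m_in by blast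
    have "mpoly_const (Poly_Mapping.lookup q m) * eval_monom (\<lambda>v. \<psi> (var v)) m
        = mpoly_smult (Poly_Mapping.lookup q m) (\<psi> (var v))"
      by (simp add: m eval_monom_def mpoly_smult_def)
    also have "\<dots> = \<psi> (mpoly_smult (Poly_Mapping.lookup q m) (var v))"
      using linear_scale[OF linear] by simp
    finally show ?thesis by (simp add: mpoly_smult_def var_def m mpoly_const_mult_single)
  qed
  then have "mpoly_subst (\<lambda>v. \<psi> (var v)) q
      = (\<Sum>m\<in>Poly_Mapping.keys q. \<psi> (Poly_Mapping.single m (Poly_Mapping.lookup q m)))"
    unfolding mpoly_subst_def by (rule sum.cong[OF refl])
  also have "\<dots> = \<psi> q"
    using linear_sum[OF linear] poly_mapping_sum_single[of q] by metis
  finally show ?thesis .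
qed

text \<open>A linear map sending the forms \<open>g d\<close> to the variables \<open>x\<^sub>d\<close> extends to a
  substitution which is a left inverse of \<open>mpoly_subst g\<close>.\<close>
lemma linear_forms_algebraically_independent:
  fixes g :: "'d \<Rightarrow> ('v, 'k::field) mpoly" and p :: "('d, 'k) mpoly"
  assumes linear_forms: "\<And>d m. m \<in> Poly_Mapping.keys (g d) \<Longrightarrow> \<exists>v. m = Poly_Mapping.single v 1"
    and independent: "\<And>T c. finite T \<Longrightarrow> (\<Sum>d\<in>T. mpoly_const (c d) * g d) = 0 \<Longrightarrow> \<forall>d\<in>T. c d = 0"
    and "p \<noteq> 0"
  shows "mpoly_subst g p \<noteq> 0"
proof -
  interpret vs: vector_space "mpoly_smult :: 'k \<Rightarrow> ('v, 'k) mpoly \<Rightarrow> _"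
    by (rule vector_space_mpoly_smult)
  interpret vector_space_pair "mpoly_smult :: 'k \<Rightarrow> ('v, 'k) mpoly \<Rightarrow> _"
    "mpoly_smult :: 'k \<Rightarrow> ('d, 'k) mpoly \<Rightarrow> _"
    by (rule vector_space_pair_mpoly_smult)
  have inj: "inj g"
  proof (rule injI, rule ccontr)
    fix d1 d2 assume "g d1 = g d2" "d1 \<noteq> d2"
    then have "(\<Sum>d\<in>{d1, d2}. mpoly_const (if d = d1 then 1 else -1) * g d) = 0"
      by (simp add: mpoly_const_def single_uminus)
    from independent[OF _ this] show False by simp
  qed
  have "vs.independent (range g)"
    unfolding vs.independent_explicit_finite_subsets
  proof (intro allI impI ballI)
    fix S u w assume S: "S \<subseteq> range g" "finite S" and "(\<Sum>v\<in>S. mpoly_smult (u v) v) = 0" "w \<in> S"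
    obtain T where T: "S = g ` T" "inj_on g T"
      using subset_image_inj[THEN iffD1, OF S(1)] by blast
    with S(2) have "finite T" by (simp add: finite_image_iff)
    have "(\<Sum>d\<in>T. mpoly_const (u (g d)) * g d) = 0"
      using sum.reindex[OF T(2), of "\<lambda>v. mpoly_smult (u v) v"] T(1)
        \<open>(\<Sum>v\<in>S. mpoly_smult (u v) v) = 0\<close> by (simp add: mpoly_smult_def)
    then have "\<forall>d\<in>T. u (g d) = 0" by (rule independent[OF \<open>finite T\<close>])
    with T(1) \<open>w \<in> S\<close> show "u w = 0" by blast
  qed
  then obtain \<psi> :: "('v, 'k) mpoly \<Rightarrow> ('d, 'k) mpoly"
    where linear: "Vector_Spaces.linear mpoly_smult mpoly_smult \<psi>" and "\<forall>x\<in>range g. \<psi> x = var (inv g x)"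
    using linear_independent_extend[of "range g" "\<lambda>x. var (inv g x)"] by blast
  with inj have \<psi>_g: "\<psi> (g d) = var d" for d by simp
  have "mpoly_subst (\<lambda>v. \<psi> (var v)) (mpoly_subst g p) = p"
    by (simp add: mpoly_subst_compose mpoly_subst_linear_form[OF linear linear_forms] \<psi>_g
        mpoly_subst_var_id)
  with \<open>p \<noteq> 0\<close> show ?thesis by auto
qed

section \<open>Arithmetic in \<open>M\<^sub>I\<^sub>,\<^sub>\<Lambda>\<close>\<close>

lemma lookup_tscale: "Poly_Mapping.lookup (tscale u r) i = Poly_Mapping.lookup u i * r"
  by (simp add: tscale_def Poly_Mapping.map.rep_eq when_def)

lemma tscale_eq_0_iff:
  fixes u :: "'i \<Rightarrow>\<^sub>0 ('v, 'k::idom) mpoly"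
  shows "tscale u r = 0 \<longleftrightarrow> u = 0 \<or> r = 0"
proof -
  have "tscale u r = 0 \<longleftrightarrow> (\<forall>i. Poly_Mapping.lookup u i * r = 0)"
    by (metis lookup_tscale lookup_zero poly_mapping_eqI)
  then show ?thesis
    by (metis lookup_zero mpoly_mult_eq_0_iff poly_mapping_eqI)
qed

lemma fst_kscale: "fst (kscale c x) = mpoly_const c * fst x"
  using mult_map_scale_conv_mult[of c "fst x"] by (simp add: kscale_def mpoly_const_def)

lemma lookup_snd_kscale:
  "Poly_Mapping.lookup (snd (kscale c x)) i = mpoly_const c * Poly_Mapping.lookup (snd x) i"
  by (simp add: kscale_def Poly_Mapping.map.rep_eq when_def mpoly_const_def mult_map_scale_conv_mult)

lemma fst_mprod [simp]: "fst (x \<circ>\<^sub>M y) = 0"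
  by (simp add: mprod_def)

lemma lookup_snd_mprod: "Poly_Mapping.lookup (snd (x \<circ>\<^sub>M y)) i
   = Poly_Mapping.lookup (snd x) i * fst y - Poly_Mapping.lookup (snd y) i * fst x"
  by (simp add: mprod_def lookup_minus lookup_tscale)

lemma melt_eqI:
  fixes x y :: "('a, 'i, 'k::comm_ring_1) melt"
  assumes "fst x = fst y" "\<And>i. Poly_Mapping.lookup (snd x) i = Poly_Mapping.lookup (snd y) i"
  shows "x = y"
  using assms by (metis poly_mapping_eqI prod_eqI)

lemma melt_eq_0I:
  fixes x :: "('a, 'i, 'k::comm_ring_1) melt"
  assumes "fst x = 0" "\<And>i. Poly_Mapping.lookup (snd x) i = 0"
  shows "x = 0"
  by (rule melt_eqI) (use assms in auto)

lemma kscale_zero [simp]: "kscale c (0 :: ('a, 'i, 'k::comm_ring_1) melt) = 0"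
  by (rule melt_eq_0I) (simp_all add: fst_kscale lookup_snd_kscale)

lemma kscale_zero_left [simp]: "kscale 0 (x :: ('a, 'i, 'k::comm_ring_1) melt) = 0"
  by (rule melt_eq_0I) (simp_all add: fst_kscale lookup_snd_kscale)

lemma kscale_one [simp]: "kscale 1 (x :: ('a, 'i, 'k::comm_ring_1) melt) = x"
  by (rule melt_eqI) (simp_all add: fst_kscale lookup_snd_kscale)

lemma fst_sum: "fst (sum F S) = (\<Sum>x\<in>S. fst (F x))"
  by (induction S rule: infinite_finite_induct) auto

lemma snd_sum: "snd (sum F S) = (\<Sum>x\<in>S. snd (F x))"
  by (induction S rule: infinite_finite_induct) auto

lemma mprod_tscale: "(0, tscale w r) \<circ>\<^sub>M x = (0, tscale w (r * fst x))"
  by (rule melt_eqI) (simp_all add: lookup_snd_mprod lookup_tscale algebra_simps)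

lemma centralizer_nonscalar_abelian:
  fixes x y z :: "('a, 'i, 'k::idom) melt"
  assumes "fst x \<noteq> 0" "x \<circ>\<^sub>M y = 0" "x \<circ>\<^sub>M z = 0"
  shows "y \<circ>\<^sub>M z = 0"
proof (rule melt_eq_0I)
  fix i
  let ?u = "Poly_Mapping.lookup (snd x) i"
  let ?v = "Poly_Mapping.lookup (snd y) i" and ?w = "Poly_Mapping.lookup (snd z) i"
  from assms(2,3) have "?v * fst x = ?u * fst y" "?w * fst x = ?u * fst z"
    using lookup_snd_mprod[of x y i] lookup_snd_mprod[of x z i] by simp_all
  have "(?v * fst z - ?w * fst y) * fst x = fst z * (?v * fst x) - fst y * (?w * fst x)"
    by (simp add: algebra_simps)
  also have "\<dots> = 0"
    by (simp add: \<open>?v * fst x = ?u * fst y\<close> \<open>?w * fst x = ?u * fst z\<close>)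
  finally have "(?v * fst z - ?w * fst y) * fst x = 0" .
  with assms(1) show "Poly_Mapping.lookup (snd (y \<circ>\<^sub>M z)) i = 0"
    by (simp add: lookup_snd_mprod mpoly_mult_eq_0_iff)
qed simp

section \<open>Nilpotent ideals and the Fitting ideal\<close>

lemma ksubspace_sum:
  assumes "ksubspace V" "\<And>x. x \<in> S \<Longrightarrow> F x \<in> V"
  shows "sum F S \<in> V"
  using assms by (induction S rule: infinite_finite_induct) (auto simp: ksubspace_def)

lemma kspan_superset: "S \<subseteq> kspan S"
  by (auto simp: kspan_def)

lemma kspan_zero: "kspan ({0} :: ('a, 'i, 'k::comm_ring_1) melt set) = {0}"
proof (rule antisym)
  show "kspan {0} \<subseteq> ({0} :: ('a, 'i, 'k) melt set)"
    unfolding kspan_def by (rule Inter_lower) (simp add: ksubspace_def)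
qed (rule kspan_superset)

lemma abelian_imp_nilpotent_set:
  fixes N :: "('a, 'i, 'k::comm_ring_1) melt set"
  assumes "ksubspace N" "\<forall>x\<in>N. \<forall>y\<in>N. x \<circ>\<^sub>M y = 0"
  shows "nilpotent_set N"
proof -
  have "0 \<circ>\<^sub>M 0 = (0 :: ('a, 'i, 'k) melt)"
    by (rule melt_eq_0I) (simp_all add: lookup_snd_mprod)
  with assms have "{x \<circ>\<^sub>M y | x y. x \<in> N \<and> y \<in> N} = {0}"
    by (auto simp: ksubspace_def) (metis)
  then have "lcs N 1 = {0}" by (simp add: kspan_zero)
  then show ?thesis unfolding nilpotent_set_def by blast
qed

lemma Fit_least:
  assumes "lie_ideal J A" "\<And>N. lie_ideal N A \<Longrightarrow> nilpotent_set N \<Longrightarrow> N \<subseteq> J"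
  shows "Fit A \<subseteq> J"
  unfolding Fit_def using assms by blast

lemma nilpotent_ideal_subset_Fit:
  assumes "lie_ideal N A" "nilpotent_set N"
  shows "N \<subseteq> Fit A"
  unfolding Fit_def using assms by blast

lemma tscale_power_in_lcs:
  assumes "(0, w) \<in> N" "x \<in> N"
  shows "(0, tscale w (fst x ^ k)) \<in> lcs N k"
proof (induction k)
  case 0
  have "tscale w 1 = w" by (rule poly_mapping_eqI) (simp add: lookup_tscale)
  with assms(1) show ?case by simp
next
  case (Suc k)
  have "(0, tscale w (fst x ^ k)) \<circ>\<^sub>M x \<in> {a \<circ>\<^sub>M b | a b. a \<in> lcs N k \<and> b \<in> N}"
    using Suc.IH assms(2) by blast
  then have "(0, tscale w (fst x ^ k)) \<circ>\<^sub>M x \<in> lcs N (Suc k)"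
    unfolding lcs.simps by (rule subsetD[OF kspan_superset])
  then show ?case by (simp add: mprod_tscale mult.commute)
qed

lemma nilpotent_ideal_nonscalar_central:
  fixes A N :: "('a, 'i, 'k::idom) melt set"
  assumes N: "lie_ideal N A" "nilpotent_set N" and x: "x \<in> N" "fst x \<noteq> 0" and "y \<in> A"
  shows "x \<circ>\<^sub>M y = 0"
proof -
  have "(0, snd (x \<circ>\<^sub>M y)) \<in> N"
    using N(1) x(1) \<open>y \<in> A\<close> by (metis fst_mprod lie_ideal_def prod.collapse)
  moreover obtain n where "lcs N n = {0}" using N(2) nilpotent_set_def by blast
  ultimately have "tscale (snd (x \<circ>\<^sub>M y)) (fst x ^ n) = 0"
    using tscale_power_in_lcs[OF _ x(1), of "snd (x \<circ>\<^sub>M y)" n] by (simp add: zero_prod_def)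
  with x(2) have "snd (x \<circ>\<^sub>M y) = 0"
    by (cases n) (simp_all add: tscale_eq_0_iff mpoly_power_eq_0_iff del: power_Suc)
  then show ?thesis by (simp add: prod_eq_iff)
qed

lemma abelian_or_Fit_eq_fst_zero:
  fixes A :: "('a, 'i, 'k::idom) melt set"
  assumes "subalgebra A B"
  shows "(\<forall>x\<in>A. \<forall>y\<in>A. x \<circ>\<^sub>M y = 0) \<or> Fit A = {x\<in>A. fst x = 0}"
proof (cases "\<exists>N x. lie_ideal N A \<and> nilpotent_set N \<and> x \<in> N \<and> fst x \<noteq> 0")
  case True
  then obtain N x where "lie_ideal N A" "nilpotent_set N" "x \<in> N" "fst x \<noteq> 0" by blast
  then show ?thesis
    using nilpotent_ideal_nonscalar_central centralizer_nonscalar_abelian by blast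
next
  case False
  let ?A0 = "{x\<in>A. fst x = 0}"
  have "ksubspace ?A0"
    using assms by (auto simp: subalgebra_def ksubspace_def fst_kscale)
  moreover have "\<forall>x\<in>?A0. \<forall>y\<in>?A0. x \<circ>\<^sub>M y = 0"
    by (auto intro!: melt_eq_0I simp: lookup_snd_mprod)
  ultimately have "lie_ideal ?A0 A" "nilpotent_set ?A0"
    using assms by (auto simp: lie_ideal_def subalgebra_def intro: abelian_imp_nilpotent_set)
  moreover have "N \<subseteq> ?A0" if "lie_ideal N A" "nilpotent_set N" for N
  proof -
    have "N \<subseteq> A" using \<open>lie_ideal N A\<close> by (simp add: lie_ideal_def)
    with False that show ?thesis by blast
  qed
  ultimately have "Fit A = ?A0"
    by (simp add: Fit_least nilpotent_ideal_subset_Fit subset_antisym)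
  then show ?thesis ..
qed

section \<open>The module structure on elements with vanishing first component\<close>

lemma prod_list_map_eq_prod_count:
  assumes "finite T" "set xs \<subseteq> T"
  shows "prod_list (map g xs) = (\<Prod>d\<in>T. (g d :: 'b::comm_monoid_mult) ^ count_list xs d)"
  using assms(2)
proof (induction xs)
  case (Cons x xs)
  have "(\<Prod>d\<in>T. g d ^ count_list (x # xs) d)
      = (\<Prod>d\<in>T. (if d = x then g d else 1) * g d ^ count_list xs d)"
    by (rule prod.cong) auto
  also have "\<dots> = g x * (\<Prod>d\<in>T. g d ^ count_list xs d)"
    using Cons.prems assms(1) by (simp add: prod.distrib)
  finally show ?case using Cons by simp
qed simp

lemma count_list_mon_list: "count_list (mon_list m) d = Poly_Mapping.lookup m d"
proof -
  have "\<exists>xs. \<forall>d. count_list xs d = (if d \<in> T then h d else 0)" if "finite T" for T and h :: "'a \<Rightarrow> nat"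
    using that
  proof (induction T rule: finite_induct)
    case (insert x T)
    then obtain xs where "\<forall>d. count_list xs d = (if d \<in> T then h d else 0)" by blast
    moreover have "count_list (replicate n x) d = (if d = x then n else 0)" for n d
      by (induction n) auto
    ultimately show ?case
      using insert by (intro exI[of _ "replicate (h x) x @ xs"]) auto
  qed (intro exI[of _ "[]"], simp)
  from this[of "Poly_Mapping.keys m" "Poly_Mapping.lookup m"]
  have "\<exists>xs. \<forall>d. count_list xs d = Poly_Mapping.lookup m d"
    by (metis finite_keys not_in_keys_iff_lookup_eq_zero)
  then show ?thesis
    unfolding mon_list_def by (rule someI_ex[THEN spec])
qed

lemma prod_list_map_mon_list: "prod_list (map g (mon_list m)) = eval_monom g m"
proof -
  have "set (mon_list m) = Poly_Mapping.keys m"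
    using count_list_mon_list[of m] count_list_0_iff[of "mon_list m"] by (auto simp: in_keys_iff)
  then show ?thesis
    by (simp add: prod_list_map_eq_prod_count[of "set (mon_list m)"] eval_monom_def count_list_mon_list)
qed

lemma poly_act_fst_zero:
  assumes "fst b = 0"
  shows "poly_act e b p = (0, tscale (snd b) (mpoly_subst (\<lambda>d. fst (e d)) p))"
proof -
  have fold: "fold (\<lambda>d c. c \<circ>\<^sub>M e d) xs (0, tscale w r) = (0, tscale w (r * prod_list (map (\<lambda>d. fst (e d)) xs)))"
    for xs w r
    by (induction xs arbitrary: r) (simp_all add: mprod_tscale mult.assoc)
  define w where "w = snd b"
  have b: "b = (0, tscale w 1)"
    by (rule melt_eqI) (simp_all add: assms w_def lookup_tscale)
  have "mon_act e b m = (0, tscale w (eval_monom (\<lambda>d. fst (e d)) m))" for m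
    unfolding mon_act_def b by (simp add: fold prod_list_map_mon_list)
  then show ?thesis
    unfolding w_def
    by (intro melt_eqI) (simp_all add: poly_act_def fst_sum snd_sum lookup_sum lookup_snd_kscale
        fst_kscale lookup_tscale mpoly_subst_def sum_distrib_left algebra_simps)
qed

lemma lincomb_single: "lincomb e (Poly_Mapping.single d 1) = e d"
  by (simp add: lincomb_def)

lemma lincomb_restrict:
  assumes "finite T"
  obtains c' where "lincomb e c' = (\<Sum>d\<in>T. kscale (c d) (e d))" "\<forall>d\<in>T. Poly_Mapping.lookup c' d = c d"
proof
  define c' where "c' = Abs_poly_mapping (\<lambda>d. if d \<in> T then c d else 0)"
  have lookup_c': "Poly_Mapping.lookup c' = (\<lambda>d. if d \<in> T then c d else 0)"
    unfolding c'_def using assms by (intro lookup_Abs_poly_mapping) (auto elim: finite_subset[rotated])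
  then show "\<forall>d\<in>T. Poly_Mapping.lookup c' d = c d" by simp
  have "Poly_Mapping.keys c' \<subseteq> T" by (auto simp: in_keys_iff lookup_c' split: if_splits)
  then show "lincomb e c' = (\<Sum>d\<in>T. kscale (c d) (e d))"
    unfolding lincomb_def using assms
    by (intro sum.mono_neutral_cong_left) (auto simp: lookup_c' in_keys_iff)
qed

lemma fst_independent_of_independent_mod:
  assumes "ksubspace A" "\<forall>d. e d \<in> A" "{x\<in>A. fst x = 0} \<subseteq> F"
    and "\<forall>c. lincomb e c \<in> F \<longrightarrow> c = 0"
    and "finite T" "(\<Sum>d\<in>T. mpoly_const (c d) * fst (e d)) = 0"
  shows "\<forall>d\<in>T. c d = 0"
proof -
  obtain c' where c': "lincomb e c' = (\<Sum>d\<in>T. kscale (c d) (e d))"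
    "\<forall>d\<in>T. Poly_Mapping.lookup c' d = c d"
    using lincomb_restrict[OF \<open>finite T\<close>] .
  have "(\<Sum>d\<in>T. kscale (c d) (e d)) \<in> A"
    using assms(1,2) by (intro ksubspace_sum) (auto simp: ksubspace_def)
  moreover have "fst (\<Sum>d\<in>T. kscale (c d) (e d)) = 0"
    using assms(6) by (simp add: fst_sum fst_kscale)
  ultimately have "lincomb e c' \<in> F"
    using c'(1) assms(3) by auto
  with assms(4) c'(2) show ?thesis by auto
qed

lemma Fit_eq_fst_zero:
  fixes A :: "('a, 'i, 'k::idom) melt set"
  assumes sub: "subalgebra A B" and "\<forall>d. e d \<in> A" and "\<forall>c. lincomb e c \<in> Fit A \<longrightarrow> c = 0"
  shows "Fit A = {x\<in>A. fst x = 0}"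
proof -
  have "\<not> A \<subseteq> Fit A"
  proof
    assume "A \<subseteq> Fit A"
    with assms(2) have "lincomb e (Poly_Mapping.single undefined 1) \<in> Fit A"
      by (auto simp: lincomb_single)
    with assms(3) show False by (metis lookup_single_eq lookup_zero one_neq_zero)
  qed
  moreover have "A \<subseteq> Fit A" if "\<forall>x\<in>A. \<forall>y\<in>A. x \<circ>\<^sub>M y = 0"
    using sub that
    by (intro nilpotent_ideal_subset_Fit abelian_imp_nilpotent_set) (auto simp: subalgebra_def lie_ideal_def)
  ultimately show ?thesis
    using abelian_or_Fit_eq_fst_zero[OF sub] by blast
qed

theorem lemma3p1p2:
  fixes A :: "('a, 'i, 'k::field) melt set"
    and e :: "'d \<Rightarrow> ('a, 'i, 'k) melt"
  assumes sub: "subalgebra A M0"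
    and eA: "\<forall>d. e d \<in> A"
    and span: "\<forall>a\<in>A. \<exists>c. a - lincomb e c \<in> Fit A"
    and indep: "\<forall>c. lincomb e c \<in> Fit A \<longrightarrow> c = 0"
  shows "(\<forall>x\<in>Fit A. \<forall>y\<in>Fit A. x \<circ>\<^sub>M y = 0) \<and>
         (\<forall>b\<in>Fit A. \<forall>p :: ('d, 'k) mpoly. p \<noteq> 0 \<longrightarrow> poly_act e b p = 0 \<longrightarrow> b = 0)"
proof -
  have ksA: "ksubspace A" and A_M0: "A \<subseteq> M0"
    using sub by (auto simp: subalgebra_def)
  have Fit: "Fit A = {x\<in>A. fst x = 0}"
    by (rule Fit_eq_fst_zero[OF sub eA indep])
  have subst_nonzero: "mpoly_subst (\<lambda>d. fst (e d)) p \<noteq> 0" if "p \<noteq> 0" for p :: "('d, 'k) mpoly"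
  proof (rule linear_forms_algebraically_independent[OF _ _ that])
    show "\<exists>v. m = Poly_Mapping.single v 1" if "m \<in> Poly_Mapping.keys (fst (e d))" for d m
      using that eA A_M0 unfolding M0_def by blast
    show "\<forall>d\<in>T. c d = 0" if "finite T" "(\<Sum>d\<in>T. mpoly_const (c d) * fst (e d)) = 0" for T c
      using fst_independent_of_independent_mod[OF ksA eA _ indep that] Fit by simp
  qed
  have "x \<circ>\<^sub>M y = 0" if "x \<in> Fit A" "y \<in> Fit A" for x y
    using that by (auto intro!: melt_eq_0I simp: Fit lookup_snd_mprod)
  moreover have "b = 0" if "b \<in> Fit A" "p \<noteq> 0" "poly_act e b p = 0" for b p
    using that subst_nonzero[of p] by (auto simp: Fit poly_act_fst_zero tscale_eq_0_iff prod_eq_iff)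
  ultimately show ?thesis by blast
qed

end
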